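(* Let $X$ be a locally finite poset, $R$ a commutative unital ring and $\alpha_1,\dots,\alpha_n$ pairwise commuting idempotents of $I(X,R)$. Then there exists an invertible $\beta\in I(X,R)$ such that $\alpha_i=\beta(\alpha_i)_D\beta^{-1}$ for all $1\le i\le n$.
   Context: $I(X,R)$ is the incidence algebra of the locally finite poset $X$ over $R$: functions $f:X\times X\to R$ with $f(x,y)=0$ unless $x\le y$, with product $(fg)(x,y)=\sum_{x\le z\le y}f(x,z)g(z,y)$. For $f\in I(X,R)$, its diagonal $f_D$ is defined by $f_D(x,x)=f(x,x)$ and $f_D(x,y)=0$ for $x\ne y$. *)

theory Defs
  imports Main
begin

definition locally_finite_poset :: "'a::order itself \<Rightarrow> bool" where
  "locally_finite_poset _ \<longleftrightarrow> (\<forall>x y::'a. finite {x..y})"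

definition incidence_algebra :: "('a::order \<Rightarrow> 'a \<Rightarrow> 'r::zero) set" where
  "incidence_algebra = {f. \<forall>x y. \<not> x \<le> y \<longrightarrow> f x y = 0}"

definition inc_mult :: "('a::order \<Rightarrow> 'a \<Rightarrow> 'r::comm_ring_1) \<Rightarrow> ('a \<Rightarrow> 'a \<Rightarrow> 'r) \<Rightarrow> ('a \<Rightarrow> 'a \<Rightarrow> 'r)" where
  "inc_mult f g = (\<lambda>x y. \<Sum>z\<in>{x..y}. f x z * g z y)"

definition inc_one :: "'a::order \<Rightarrow> 'a \<Rightarrow> 'r::comm_ring_1" where
  "inc_one = (\<lambda>x y. if x = y then 1 else 0)"

definition inc_diag :: "('a::order \<Rightarrow> 'a \<Rightarrow> 'r::zero) \<Rightarrow> ('a \<Rightarrow> 'a \<Rightarrow> 'r)" where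
  "inc_diag f = (\<lambda>x y. if x = y then f x x else 0)"

end

(* The diagonal map f \<mapsto> f_D is an idempotent ring endomorphism of I(X,R) with commutative
   image, and every f with f_D = 1 is invertible, since 1 - f is nilpotent on each (finite)
   interval and the geometric series in 1 - f inverts f.

   In any ring with such a projection D an idempotent g is conjugate to D g: the element
   d = g (D g) + (1 - g)(1 - D g) has D d = (D g)^2 + (1 - D g)^2 = 1, hence is a unit, and
   g d = g (D g) = d (D g). Moreover d commutes with every D-fixed element commuting with g.
   So the idempotents can be diagonalised one at a time: after conjugating the first ones to
   their diagonals, the next one commutes with these diagonals, and so does its intertwiner. *)

theory Submission
  imports Defs "HOL-Algebra.RingHom"
begin

lemma (in monoid) Units_conj_mult:
  assumes "u \<in> Units G" "x \<in> carrier G" "y \<in> carrier G"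
  shows "(inv u \<otimes> x \<otimes> u) \<otimes> (inv u \<otimes> y \<otimes> u) = inv u \<otimes> (x \<otimes> y) \<otimes> u"
  using assms by (simp add: m_assoc Units_closed flip: m_assoc[of u "inv u"])

lemma (in monoid) Units_conj_if_intertwines:
  assumes u: "u \<in> Units G" and x: "x \<in> carrier G" and y: "y \<in> carrier G"
    and xy: "x \<otimes> u = u \<otimes> y"
  shows "y = inv u \<otimes> x \<otimes> u" "x = u \<otimes> y \<otimes> inv u"
proof -
  have "y = inv u \<otimes> (u \<otimes> y)"
    using u y by (simp add: Units_closed flip: m_assoc)
  then show "y = inv u \<otimes> x \<otimes> u"
    using u x by (simp add: Units_closed m_assoc flip: xy)
  have "x = x \<otimes> u \<otimes> inv u"
    using u x by (simp add: Units_closed m_assoc)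
  then show "x = u \<otimes> y \<otimes> inv u"
    by (simp add: xy)
qed

lemma (in monoid) Units_conj_cancel:
  assumes "u \<in> Units G" "x \<in> carrier G"
  shows "u \<otimes> (inv u \<otimes> x \<otimes> u) = x \<otimes> u"
  using assms by (simp add: Units_closed flip: m_assoc)

lemma (in ring) idem_one_minus:
  assumes "e \<in> carrier R" "e \<otimes> e = e"
  shows "e \<otimes> (\<one> \<ominus> e) = \<zero>" "(\<one> \<ominus> e) \<otimes> e = \<zero>" "(\<one> \<ominus> e) \<otimes> (\<one> \<ominus> e) = \<one> \<ominus> e"
  using assms by (simp_all add: minus_eq r_distr l_distr r_minus l_minus r_neg a_assoc[symmetric])

lemma (in ring) commute_one_minus:
  "c \<in> carrier R \<Longrightarrow> x \<in> carrier R \<Longrightarrow> c \<otimes> x = x \<otimes> c \<Longrightarrow> c \<otimes> (\<one> \<ominus> x) = (\<one> \<ominus> x) \<otimes> c"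
  by (simp add: minus_eq r_distr l_distr r_minus l_minus)

locale diagonal_projection = ring R for R (structure) +
  fixes D
  assumes D_ring_hom: "D \<in> ring_hom R R"
    and D_idem: "x \<in> carrier R \<Longrightarrow> D (D x) = D x"
    and D_comm: "x \<in> carrier R \<Longrightarrow> y \<in> carrier R \<Longrightarrow> D x \<otimes> D y = D y \<otimes> D x"
    and Units_if_D_eq_one: "x \<in> carrier R \<Longrightarrow> D x = \<one> \<Longrightarrow> x \<in> Units R"
begin

sublocale D: ring_hom_ring R R D
  by (intro ring_hom_ringI2 D_ring_hom ring_axioms)

lemma D_one_minus: "x \<in> carrier R \<Longrightarrow> D (\<one> \<ominus> x) = \<one> \<ominus> D x"
  by (simp add: minus_eq)

definition idem_intertwiner :: "'a \<Rightarrow> 'a" where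
  "idem_intertwiner g = g \<otimes> D g \<oplus> (\<one> \<ominus> g) \<otimes> (\<one> \<ominus> D g)"

lemma idem_intertwiner_closed: "g \<in> carrier R \<Longrightarrow> idem_intertwiner g \<in> carrier R"
  by (simp add: idem_intertwiner_def)

lemma D_idem_intertwiner:
  assumes g: "g \<in> carrier R" "g \<otimes> g = g"
  shows "D (idem_intertwiner g) = \<one>"
proof -
  have e: "D g \<in> carrier R" "D g \<otimes> D g = D g"
    using g by (simp_all flip: D.hom_mult)
  have "D (idem_intertwiner g) = D g \<otimes> D g \<oplus> (\<one> \<ominus> D g) \<otimes> (\<one> \<ominus> D g)"
    using g by (simp add: idem_intertwiner_def D_one_minus D_idem)
  also have "\<dots> = D g \<oplus> (\<one> \<ominus> D g)"
    using idem_one_minus[OF e] e by simp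
  also have "\<dots> = \<one>"
    using e(1) by (simp add: minus_eq a_lcomm[of "D g" \<one>] r_neg)
  finally show ?thesis .
qed

lemma idem_intertwiner_Units:
  "g \<in> carrier R \<Longrightarrow> g \<otimes> g = g \<Longrightarrow> idem_intertwiner g \<in> Units R"
  by (simp add: Units_if_D_eq_one idem_intertwiner_closed D_idem_intertwiner)

lemma idem_intertwiner_intertwines:
  assumes g: "g \<in> carrier R" "g \<otimes> g = g"
  shows "g \<otimes> idem_intertwiner g = idem_intertwiner g \<otimes> D g"
proof -
  have e: "D g \<in> carrier R" "D g \<otimes> D g = D g"
    using g by (simp_all flip: D.hom_mult)
  have "g \<otimes> idem_intertwiner g = g \<otimes> D g"
    using g idem_one_minus[OF g] by (simp add: idem_intertwiner_def r_distr m_assoc[symmetric])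
  also have "\<dots> = idem_intertwiner g \<otimes> D g"
    using g e idem_one_minus[OF e] by (simp add: idem_intertwiner_def l_distr m_assoc)
  finally show ?thesis .
qed

lemma idem_intertwiner_commute:
  assumes c: "c \<in> carrier R" "D c = c" and g: "g \<in> carrier R" and cg: "c \<otimes> g = g \<otimes> c"
  shows "c \<otimes> idem_intertwiner g = idem_intertwiner g \<otimes> c"
proof -
  have ce: "c \<otimes> D g = D g \<otimes> c"
    using D_comm[OF c(1) g] c by simp
  have "c \<otimes> (g \<otimes> D g) = g \<otimes> D g \<otimes> c"
    using c g cg ce by (metis D.hom_closed m_assoc)
  moreover have "c \<otimes> ((\<one> \<ominus> g) \<otimes> (\<one> \<ominus> D g)) = (\<one> \<ominus> g) \<otimes> (\<one> \<ominus> D g) \<otimes> c"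
    using commute_one_minus[OF c(1) g cg] commute_one_minus[OF c(1) _ ce] c g
    by (metis D.hom_closed m_assoc minus_closed one_closed)
  ultimately show ?thesis
    using c g by (simp add: idem_intertwiner_def r_distr l_distr)
qed

lemma D_Units_conj:
  assumes u: "u \<in> Units R" and x: "x \<in> carrier R"
  shows "D (inv u \<otimes> x \<otimes> u) = D x"
proof -
  have uC: "u \<in> carrier R" "inv u \<in> carrier R"
    using u by auto
  have "D (inv u \<otimes> x \<otimes> u) = D (inv u) \<otimes> D x \<otimes> D u"
    using uC x by simp
  also have "\<dots> = D x \<otimes> (D (inv u) \<otimes> D u)"
    using uC x by (simp add: m_assoc D_comm[of "inv u" x])
  also have "\<dots> = D x"
    using u uC x by (simp flip: D.hom_mult)
  finally show ?thesis .
qed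

lemma intertwiner_extend:
  assumes u: "u \<in> Units R" and a: "a \<in> carrier R" "a \<otimes> a = a"
    and \<alpha>C: "\<And>i. i \<in> I \<Longrightarrow> \<alpha> i \<in> carrier R"
    and \<alpha>a: "\<And>i. i \<in> I \<Longrightarrow> \<alpha> i \<otimes> a = a \<otimes> \<alpha> i"
    and intertw: "\<And>i. i \<in> I \<Longrightarrow> \<alpha> i \<otimes> u = u \<otimes> D (\<alpha> i)"
  shows "\<exists>v\<in>Units R. a \<otimes> v = v \<otimes> D a \<and> (\<forall>i\<in>I. \<alpha> i \<otimes> v = v \<otimes> D (\<alpha> i))"
proof -
  have uC: "u \<in> carrier R" "inv u \<in> carrier R"
    using u by auto
  define g where "g = inv u \<otimes> a \<otimes> u"
  define d where "d = idem_intertwiner g"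
  have gC: "g \<in> carrier R"
    using uC a by (simp add: g_def)
  have gg: "g \<otimes> g = g"
    using Units_conj_mult[OF u a(1) a(1)] a by (simp add: g_def)
  have dU: "d \<in> Units R"
    using idem_intertwiner_Units[OF gC gg] by (simp add: d_def)
  then have dC: "d \<in> carrier R"
    by blast
  have ug: "u \<otimes> g = a \<otimes> u"
    using Units_conj_cancel[OF u a(1)] by (simp add: g_def)
  have gd: "g \<otimes> d = d \<otimes> D a"
    using idem_intertwiner_intertwines[OF gC gg] D_Units_conj[OF u a(1)] by (simp add: d_def g_def)
  have Dd: "D (\<alpha> i) \<otimes> d = d \<otimes> D (\<alpha> i)" if i: "i \<in> I" for i
  proof -
    have Di: "D (\<alpha> i) = inv u \<otimes> \<alpha> i \<otimes> u"
      using Units_conj_if_intertwines(1)[OF u \<alpha>C[OF i] _ intertw[OF i]] \<alpha>C[OF i] by simp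
    have "D (\<alpha> i) \<otimes> g = g \<otimes> D (\<alpha> i)"
      using Units_conj_mult[OF u] \<alpha>C[OF i] a \<alpha>a[OF i] by (simp add: Di g_def)
    then show ?thesis
      using idem_intertwiner_commute[of "D (\<alpha> i)" g] \<alpha>C[OF i] gC D_idem by (simp add: d_def)
  qed
  have "a \<otimes> (u \<otimes> d) = u \<otimes> (g \<otimes> d)"
    using uC dC gC a by (simp flip: ug m_assoc)
  also have "\<dots> = u \<otimes> d \<otimes> D a"
    using uC dC a by (simp add: gd m_assoc)
  finally have "a \<otimes> (u \<otimes> d) = u \<otimes> d \<otimes> D a" .
  moreover have "\<alpha> i \<otimes> (u \<otimes> d) = u \<otimes> d \<otimes> D (\<alpha> i)" if i: "i \<in> I" for i
  proof -
    have "\<alpha> i \<otimes> (u \<otimes> d) = u \<otimes> (D (\<alpha> i) \<otimes> d)"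
      using uC dC \<alpha>C[OF i] by (simp flip: intertw[OF i] m_assoc)
    also have "\<dots> = u \<otimes> d \<otimes> D (\<alpha> i)"
      using uC dC \<alpha>C[OF i] by (simp add: Dd[OF i] m_assoc)
    finally show ?thesis .
  qed
  ultimately show ?thesis
    using u dU by blast
qed

theorem simultaneous_diagonalization:
  assumes "finite I"
    and "\<And>i. i \<in> I \<Longrightarrow> \<alpha> i \<in> carrier R"
    and "\<And>i. i \<in> I \<Longrightarrow> \<alpha> i \<otimes> \<alpha> i = \<alpha> i"
    and "\<And>i j. i \<in> I \<Longrightarrow> j \<in> I \<Longrightarrow> \<alpha> i \<otimes> \<alpha> j = \<alpha> j \<otimes> \<alpha> i"
  shows "\<exists>u\<in>Units R. \<forall>i\<in>I. \<alpha> i \<otimes> u = u \<otimes> D (\<alpha> i)"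
  using assms
proof (induction I rule: finite_induct)
  case empty
  show ?case by blast
next
  case (insert k I)
  obtain u where "u \<in> Units R" "\<And>i. i \<in> I \<Longrightarrow> \<alpha> i \<otimes> u = u \<otimes> D (\<alpha> i)"
    using insert.IH insert.prems by (metis insertCI)
  then obtain v where "v \<in> Units R" "\<alpha> k \<otimes> v = v \<otimes> D (\<alpha> k)" "\<forall>i\<in>I. \<alpha> i \<otimes> v = v \<otimes> D (\<alpha> i)"
    using intertwiner_extend[of u "\<alpha> k" I \<alpha>] insert.prems by auto
  then show ?case
    by blast
qed

end

lemma finite_interval: "locally_finite_poset TYPE('a::order) \<Longrightarrow> finite {x..y::'a}"
  by (simp add: locally_finite_poset_def)

lemma inc_mult_mem [simp]: "inc_mult f g \<in> incidence_algebra"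
  by (auto simp: incidence_algebra_def inc_mult_def)

lemma inc_one_mem [simp]: "inc_one \<in> incidence_algebra"
  by (simp add: incidence_algebra_def inc_one_def)

lemma inc_diag_mem [simp]: "inc_diag f \<in> incidence_algebra"
  by (simp add: incidence_algebra_def inc_diag_def)

lemma inc_mult_assoc:
  fixes f g h :: "'a::order \<Rightarrow> 'a \<Rightarrow> 'r::comm_ring_1"
  assumes lf: "locally_finite_poset TYPE('a)"
  shows "inc_mult (inc_mult f g) h = inc_mult f (inc_mult g h)"
proof (intro ext)
  fix x y :: 'a
  have fin: "finite {a..b}" for a b :: 'a
    using finite_interval[OF lf] .
  have "inc_mult (inc_mult f g) h x y = (\<Sum>z\<in>{x..y}. \<Sum>w\<in>{w\<in>{x..y}. w \<le> z}. f x w * g w z * h z y)"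
    by (auto simp: inc_mult_def sum_distrib_right intro!: sum.cong arg_cong[where f = "\<lambda>A. sum _ A"]
        intro: order_trans)
  also have "\<dots> = (\<Sum>w\<in>{x..y}. \<Sum>z\<in>{z\<in>{x..y}. w \<le> z}. f x w * g w z * h z y)"
    by (rule sum.swap_restrict[OF fin fin])
  also have "\<dots> = inc_mult f (inc_mult g h) x y"
    by (auto simp: inc_mult_def sum_distrib_left mult.assoc intro!: sum.cong arg_cong[where f = "\<lambda>A. sum _ A"]
        intro: order_trans)
  finally show "inc_mult (inc_mult f g) h x y = inc_mult f (inc_mult g h) x y" .
qed

lemma inc_mult_one_left:
  fixes f :: "'a::order \<Rightarrow> 'a \<Rightarrow> 'r::comm_ring_1"
  assumes "locally_finite_poset TYPE('a)" "f \<in> incidence_algebra"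
  shows "inc_mult inc_one f = f"
proof (intro ext)
  fix x y :: 'a
  have "inc_mult inc_one f x y = (\<Sum>z\<in>{x..y}. if z = x then f z y else 0)"
    unfolding inc_mult_def inc_one_def by (rule sum.cong) auto
  then show "inc_mult inc_one f x y = f x y"
    using assms finite_interval[OF assms(1)] by (simp add: incidence_algebra_def)
qed

lemma inc_mult_one_right:
  fixes f :: "'a::order \<Rightarrow> 'a \<Rightarrow> 'r::comm_ring_1"
  assumes "locally_finite_poset TYPE('a)" "f \<in> incidence_algebra"
  shows "inc_mult f inc_one = f"
proof (intro ext)
  fix x y :: 'a
  have "inc_mult f inc_one x y = (\<Sum>z\<in>{x..y}. if z = y then f x z else 0)"
    unfolding inc_mult_def inc_one_def by (rule sum.cong) auto
  then show "inc_mult f inc_one x y = f x y"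
    using assms finite_interval[OF assms(1)] by (simp add: incidence_algebra_def)
qed

lemma inc_mult_inc_diag:
  "inc_mult (inc_diag f) (inc_diag g) = inc_diag (\<lambda>x y. f x y * g x y)"
  unfolding inc_mult_def inc_diag_def by (intro ext) (auto intro!: sum.neutral)

lemma inc_diag_inc_mult: "inc_diag (inc_mult f g) = inc_mult (inc_diag f) (inc_diag g)"
  unfolding inc_mult_inc_diag unfolding inc_diag_def inc_mult_def by (intro ext) simp

definition incidence_ring :: "('a::order \<Rightarrow> 'a \<Rightarrow> 'r::comm_ring_1) ring" where
  "incidence_ring = \<lparr>carrier = incidence_algebra, mult = inc_mult, one = inc_one,
     zero = (\<lambda>x y. 0), add = (\<lambda>f g x y. f x y + g x y)\<rparr>"

lemma incidence_ring_simps [simp]: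
  "carrier incidence_ring = incidence_algebra"
  "mult incidence_ring = inc_mult"
  "one incidence_ring = inc_one"
  "zero incidence_ring = (\<lambda>x y. 0)"
  "add incidence_ring = (\<lambda>f g x y. f x y + g x y)"
  by (simp_all add: incidence_ring_def)

lemma ring_incidence_ring:
  assumes lf: "locally_finite_poset TYPE('a::order)"
  shows "ring (incidence_ring :: ('a \<Rightarrow> 'a \<Rightarrow> 'r::comm_ring_1) ring)"
proof (rule ringI)
  show "abelian_group (incidence_ring :: ('a \<Rightarrow> 'a \<Rightarrow> 'r) ring)"
  proof (rule abelian_groupI)
    fix f :: "'a \<Rightarrow> 'a \<Rightarrow> 'r"
    assume "f \<in> carrier incidence_ring"
    then show "\<exists>g\<in>carrier incidence_ring. g \<oplus>\<^bsub>incidence_ring\<^esub> f = \<zero>\<^bsub>incidence_ring\<^esub>"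
      by (intro bexI[of _ "\<lambda>x y. - f x y"]) (auto simp: incidence_algebra_def)
  qed (auto simp: incidence_algebra_def algebra_simps)
  show "monoid (incidence_ring :: ('a \<Rightarrow> 'a \<Rightarrow> 'r) ring)"
    by (rule monoidI) (simp_all add: inc_mult_assoc inc_mult_one_left inc_mult_one_right lf)
qed (auto simp: inc_mult_def sum.distrib algebra_simps)

primrec inc_pow :: "('a::order \<Rightarrow> 'a \<Rightarrow> 'r::comm_ring_1) \<Rightarrow> nat \<Rightarrow> 'a \<Rightarrow> 'a \<Rightarrow> 'r" where
  "inc_pow f 0 = inc_one"
| "inc_pow f (Suc k) = inc_mult f (inc_pow f k)"

lemma inc_pow_eq_0_if_card_le:
  fixes N :: "'a::order \<Rightarrow> 'a \<Rightarrow> 'r::comm_ring_1"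
  assumes lf: "locally_finite_poset TYPE('a)" and N: "\<And>x. N x x = 0"
  shows "card {x..y} \<le> k \<Longrightarrow> inc_pow N k x y = 0"
proof (induction k arbitrary: x y)
  case 0
  then have "{x..y} = {}"
    using finite_interval[OF lf, of x y] by simp
  then show ?case by (auto simp: inc_one_def)
next
  case (Suc k)
  have "N x z * inc_pow N k z y = 0" if z: "z \<in> {x..y}" for z
  proof (cases "z = x")
    case True
    then show ?thesis by (simp add: N)
  next
    case False
    with z have "{z..y} \<subset> {x..y}"
      by (auto intro: order_trans)
    then have "card {z..y} < card {x..y}"
      using finite_interval[OF lf] by (simp add: psubset_card_mono)
    then show ?thesis
      using Suc by simp
  qed
  then show ?case by (simp add: inc_mult_def)
qed

definition inc_geometric_series :: "('a::order \<Rightarrow> 'a \<Rightarrow> 'r::comm_ring_1) \<Rightarrow> 'a \<Rightarrow> 'a \<Rightarrow> 'r" where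
  "inc_geometric_series N = (\<lambda>x y. \<Sum>k<card {x..y}. inc_pow N k x y)"

lemma inc_geometric_series_eq_sum:
  fixes N :: "'a::order \<Rightarrow> 'a \<Rightarrow> 'r::comm_ring_1"
  assumes lf: "locally_finite_poset TYPE('a)" and N: "\<And>x. N x x = 0" and K: "card {x..y} \<le> K"
  shows "inc_geometric_series N x y = (\<Sum>k<K. inc_pow N k x y)"
  unfolding inc_geometric_series_def
  by (rule sum.mono_neutral_left) (use K inc_pow_eq_0_if_card_le[where N = N, OF lf N] in auto)

lemma inc_mult_one_minus_geometric_series:
  fixes N :: "'a::order \<Rightarrow> 'a \<Rightarrow> 'r::comm_ring_1"
  assumes lf: "locally_finite_poset TYPE('a)" and N: "\<And>x. N x x = 0"
  shows "inc_mult (\<lambda>x y. inc_one x y - N x y) (inc_geometric_series N) = inc_one"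
proof (intro ext)
  fix x y :: 'a
  define K where "K = card {x..y}"
  have "inc_geometric_series N z y = (\<Sum>k<K. inc_pow N k z y)" if "z \<in> {x..y}" for z
    using that finite_interval[OF lf] unfolding K_def
    by (intro inc_geometric_series_eq_sum[where N = N, OF lf N] card_mono) (auto intro: order_trans)
  then have "inc_mult N (inc_geometric_series N) x y = (\<Sum>z\<in>{x..y}. N x z * (\<Sum>k<K. inc_pow N k z y))"
    unfolding inc_mult_def by (intro sum.cong refl) simp
  also have "\<dots> = (\<Sum>k<K. inc_pow N (Suc k) x y)"
    by (simp add: inc_mult_def sum_distrib_left sum.swap[of _ "{x..y}"])
  finally have NG: "inc_mult N (inc_geometric_series N) x y = (\<Sum>k<K. inc_pow N (Suc k) x y)" .
  have "inc_mult (\<lambda>x y. inc_one x y - N x y) (inc_geometric_series N) x y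
      = inc_mult inc_one (inc_geometric_series N) x y - inc_mult N (inc_geometric_series N) x y"
    by (simp add: inc_mult_def sum_subtractf left_diff_distrib)
  also have "\<dots> = inc_geometric_series N x y - inc_mult N (inc_geometric_series N) x y"
    using inc_mult_one_left[OF lf, of "inc_geometric_series N"]
    by (simp add: incidence_algebra_def inc_geometric_series_def)
  also have "\<dots> = (\<Sum>k<K. inc_pow N k x y - inc_pow N (Suc k) x y)"
    unfolding NG by (simp add: K_def inc_geometric_series_def sum_subtractf)
  also have "\<dots> = inc_pow N 0 x y - inc_pow N K x y"
    by (rule sum_lessThan_telescope')
  also have "\<dots> = inc_one x y"
    using inc_pow_eq_0_if_card_le[where N = N, OF lf N] by (simp add: K_def)
  finally show "inc_mult (\<lambda>x y. inc_one x y - N x y) (inc_geometric_series N) x y = inc_one x y" .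
qed

lemma inc_right_inverse_if_diag_one:
  fixes f :: "'a::order \<Rightarrow> 'a \<Rightarrow> 'r::comm_ring_1"
  assumes lf: "locally_finite_poset TYPE('a)" and f: "\<And>x. f x x = 1"
  shows "\<exists>g\<in>incidence_algebra. (\<forall>x. g x x = 1) \<and> inc_mult f g = inc_one"
proof (intro bexI conjI allI)
  define N where "N = (\<lambda>x y. inc_one x y - f x y)"
  have N0: "N x x = 0" for x
    by (simp add: N_def inc_one_def f)
  show "inc_geometric_series N \<in> incidence_algebra"
    by (auto simp: incidence_algebra_def inc_geometric_series_def)
  show "inc_geometric_series N x x = 1" for x
    by (simp add: inc_geometric_series_def inc_one_def)
  show "inc_mult f (inc_geometric_series N) = inc_one"
    using inc_mult_one_minus_geometric_series[where N = N, OF lf N0] by (simp add: N_def)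
qed

lemma Units_incidence_ring_if_diag_one:
  fixes f :: "'a::order \<Rightarrow> 'a \<Rightarrow> 'r::comm_ring_1"
  assumes lf: "locally_finite_poset TYPE('a)" and fI: "f \<in> incidence_algebra" and f: "\<And>x. f x x = 1"
  shows "f \<in> Units (incidence_ring :: ('a \<Rightarrow> 'a \<Rightarrow> 'r) ring)"
proof -
  interpret ring "incidence_ring :: ('a \<Rightarrow> 'a \<Rightarrow> 'r) ring"
    by (rule ring_incidence_ring[OF lf])
  obtain g where g: "g \<in> incidence_algebra" "\<And>x. g x x = 1" "inc_mult f g = inc_one"
    using inc_right_inverse_if_diag_one[where f = f, OF lf f] by blast
  obtain h where h: "h \<in> incidence_algebra" "inc_mult g h = inc_one"
    using inc_right_inverse_if_diag_one[where f = g, OF lf g(2)] by blast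
  have "f = h"
    using inv_unique[of f g h] fI g h by simp
  then show ?thesis
    using fI g h by (auto simp: Units_def)
qed

lemma diagonal_projection_inc_diag:
  assumes lf: "locally_finite_poset TYPE('a::order)"
  shows "diagonal_projection (incidence_ring :: ('a \<Rightarrow> 'a \<Rightarrow> 'r::comm_ring_1) ring) inc_diag"
proof -
  interpret ring "incidence_ring :: ('a \<Rightarrow> 'a \<Rightarrow> 'r) ring"
    by (rule ring_incidence_ring[OF lf])
  show ?thesis
  proof
    show "inc_diag \<in> ring_hom incidence_ring (incidence_ring :: ('a \<Rightarrow> 'a \<Rightarrow> 'r) ring)"
      by (rule ring_hom_memI) (simp_all add: inc_diag_inc_mult, auto simp: inc_diag_def inc_one_def fun_eq_iff)
    fix f g :: "'a \<Rightarrow> 'a \<Rightarrow> 'r"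
    show "inc_diag (inc_diag f) = inc_diag f"
      by (auto simp: inc_diag_def fun_eq_iff)
    show "inc_diag f \<otimes>\<^bsub>incidence_ring\<^esub> inc_diag g = inc_diag g \<otimes>\<^bsub>incidence_ring\<^esub> inc_diag f"
      by (simp add: inc_mult_inc_diag mult.commute)
    assume f: "f \<in> carrier incidence_ring" and Df: "inc_diag f = \<one>\<^bsub>incidence_ring\<^esub>"
    have f1: "f x x = 1" for x
      using fun_cong[OF fun_cong[OF Df, of x], of x] by (simp add: inc_diag_def inc_one_def)
    show "f \<in> Units incidence_ring"
      using Units_incidence_ring_if_diag_one[where f = f, OF lf _ f1] f by simp
  qed
qed

theorem lemma5p4:
  fixes \<alpha> :: "nat \<Rightarrow> ('a::order \<Rightarrow> 'a \<Rightarrow> 'r::comm_ring_1)" and n :: nat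
  assumes lf: "locally_finite_poset TYPE('a)"
    and inI: "\<And>i. i \<in> {1..n} \<Longrightarrow> \<alpha> i \<in> incidence_algebra"
    and idem: "\<And>i. i \<in> {1..n} \<Longrightarrow> inc_mult (\<alpha> i) (\<alpha> i) = \<alpha> i"
    and comm: "\<And>i j. i \<in> {1..n} \<Longrightarrow> j \<in> {1..n} \<Longrightarrow> inc_mult (\<alpha> i) (\<alpha> j) = inc_mult (\<alpha> j) (\<alpha> i)"
  shows "\<exists>\<beta> \<beta>'. \<beta> \<in> incidence_algebra \<and> \<beta>' \<in> incidence_algebra \<and>
           inc_mult \<beta> \<beta>' = inc_one \<and> inc_mult \<beta>' \<beta> = inc_one \<and>
           (\<forall>i\<in>{1..n}. \<alpha> i = inc_mult (inc_mult \<beta> (inc_diag (\<alpha> i))) \<beta>')"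
proof -
  interpret diagonal_projection "incidence_ring :: ('a \<Rightarrow> 'a \<Rightarrow> 'r) ring" inc_diag
    by (rule diagonal_projection_inc_diag[OF lf])
  obtain u where u: "u \<in> Units incidence_ring"
    and intertw: "\<And>i. i \<in> {1..n} \<Longrightarrow> inc_mult (\<alpha> i) u = inc_mult u (inc_diag (\<alpha> i))"
    using simultaneous_diagonalization[of "{1..n}" \<alpha>] inI idem comm by auto
  let ?u' = "inv\<^bsub>incidence_ring\<^esub> u"
  have conj: "\<alpha> i = inc_mult (inc_mult u (inc_diag (\<alpha> i))) ?u'" if "i \<in> {1..n}" for i
    using Units_conj_if_intertwines(2)[of u "\<alpha> i" "inc_diag (\<alpha> i)"] u inI[OF that] intertw[OF that]
    by simp
  have "u \<in> incidence_algebra" "?u' \<in> incidence_algebra" "inc_mult u ?u' = inc_one" "inc_mult ?u' u = inc_one"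
    using Units_closed[OF u] Units_inv_closed[OF u] Units_r_inv[OF u] Units_l_inv[OF u] by simp_all
  then show ?thesis
    using conj by blast
qed

end
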